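(* Let $c\ge1$ and define $f:\{0,1,2,\dots\}\to\mathbb{R}$ by $f(m)=(1-2^{-m})(c-m)$. Let $m^*$ be the largest integer $m$ at which $f$ attains its maximum. Then $\log_2 c-2<m^*\le\log_2 c+1$. *)

theory Defs
  imports Complex_Main
begin

definition f_lemma2 :: "real \<Rightarrow> nat \<Rightarrow> real" where
  "f_lemma2 c m = (1 - 2 powr (- real m)) * (c - real m)"

end

theory Submission
  imports Defs
begin

text \<open>Since \<open>f(m+1) - f(m) = (c - m + 1)/2^(m+1) - 1\<close>, the function increases from \<open>m\<close> to
  \<open>m + 1\<close> exactly when \<open>2^(m+1) \<le> c - m + 1\<close>. At the largest maximiser \<open>m\<^sup>*\<close> the step
  to \<open>m\<^sup>* + 1\<close> strictly decreases \<open>f\<close>, which forces \<open>c < 2^(m\<^sup>*+2)\<close>; if \<open>m\<^sup>* > 0\<close>, the step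
  into \<open>m\<^sup>*\<close> does not decrease \<open>f\<close>, which forces \<open>2^(m\<^sup>*-1) \<le> c\<close>. Taking logarithms gives
  both bounds.\<close>

lemma f_lemma2_eq: "f_lemma2 c m = (1 - 1 / 2 ^ m) * (c - real m)"
  by (simp add: f_lemma2_def powr_minus powr_realpow divide_inverse)

lemma f_lemma2_Suc_minus:
  "f_lemma2 c (Suc m) - f_lemma2 c m = (c - real m + 1) / 2 ^ Suc m - 1"
  unfolding f_lemma2_eq by (simp add: field_simps)

lemma f_lemma2_le_Suc_imp_two_power_le:
  assumes "f_lemma2 c m \<le> f_lemma2 c (Suc m)"
  shows "2 ^ m \<le> c"
proof -
  have "1 \<le> (c - real m + 1) / 2 ^ Suc m"
    using assms f_lemma2_Suc_minus[of c m] by linarith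
  hence "2 * 2 ^ m \<le> c - real m + 1"
    by (simp add: le_divide_eq)
  moreover have "(1::real) \<le> 2 ^ m" by simp
  ultimately show ?thesis by linarith
qed

lemma f_lemma2_Suc_less_imp_less_two_power:
  assumes "f_lemma2 c (Suc m) < f_lemma2 c m"
  shows "c < 2 ^ (m + 2)"
proof -
  have "(c - real m + 1) / 2 ^ Suc m < 1"
    using assms f_lemma2_Suc_minus[of c m] by linarith
  hence "c - real m + 1 < 2 * 2 ^ m"
    by (simp add: divide_less_eq)
  moreover have "real m < 2 ^ m"
    by (simp add: of_nat_less_two_power)
  moreover have "(2::real) ^ (m + 2) = 4 * 2 ^ m"
    by simp
  ultimately show ?thesis by linarith
qed

theorem lemma2:
  fixes c :: real and mstar :: nat
  assumes "c \<ge> 1"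
    and "\<forall>m. f_lemma2 c m \<le> f_lemma2 c mstar"
    and "\<forall>m. f_lemma2 c m = f_lemma2 c mstar \<longrightarrow> m \<le> mstar"
  shows "log 2 c - 2 < real mstar \<and> real mstar \<le> log 2 c + 1"
proof
  have "f_lemma2 c (Suc mstar) < f_lemma2 c mstar"
    using assms(2,3) by (metis Suc_n_not_le_n order_le_less)
  hence "c < 2 ^ (mstar + 2)"
    by (rule f_lemma2_Suc_less_imp_less_two_power)
  hence "c < 2 powr real (mstar + 2)"
    by (subst powr_realpow) simp_all
  hence "log 2 c < real (mstar + 2)"
    using assms(1) by (subst log_less_iff) auto
  thus "log 2 c - 2 < real mstar"
    by simp
next
  show "real mstar \<le> log 2 c + 1"
  proof (cases mstar)
    case 0
    thus ?thesis using assms(1) by simp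
  next
    case (Suc k)
    hence "2 powr real k \<le> c"
      using assms(2) f_lemma2_le_Suc_imp_two_power_le[of c k] by (simp add: powr_realpow)
    hence "real k \<le> log 2 c"
      using assms(1) by (simp add: le_log_iff)
    thus ?thesis using Suc by simp
  qed
qed

end
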